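(* Let $Q\succeq0$, $q\in\mathbb{R}^n$, $A\succ0$, $v\in\mathbb{R}^n$, and let $m>0$ satisfy Requirement 2. Let $x_1\in\mathcal{C}$ and define $x_{k+1}=x_k-\gamma_k\nabla J_k(x_k)$ for $k\in\mathbb{N}$, where the step sizes satisfy $0<\gamma_k\le 1/L_k$ for all $k$, $\sum_{k=1}^\infty\gamma_k^2<\infty$ and $\sum_{k=1}^\infty\gamma_k=\infty$. Then for any minimizer $x^\star\in\mathcal{X}^\star$ of the constrained problem, $f(x_k)\to f(x^\star)$ as $k\to\infty$.
   Context: $Q\in\mathbb{R}^{n\times n}$ symmetric positive semidefinite, $A\in\mathbb{R}^{n\times n}$ symmetric positive definite. $f(x)=\tfrac12 x^\top Qx+q^\top x$, $g(x)=(x-v)^\top A(x-v)$, $\mathcal{C}=\{x:g(x)\le1\}$, $\partial\mathcal{C}=\{x:g(x)=1\}$, $\mathcal{X}^\star=\arg\min_{x\in\mathcal{C}}f(x)$. $J_k(x)=f(x)+\frac{m}{k}g(x)^k$ for $k\in\mathbb{N}=\{1,2,\dots\}$, $L_k=\bar\sigma(Q+m(4k-2)A)$, with $\bar\sigma,\underline\sigma$ the largest/smallest singular value; $r=\sqrt{\underline\sigma(A)}/\bar\sigma(A)$. Requirement 2: with $w(x)=\nabla f(x)+m\nabla g(x)$, for every $x\in\partial\mathcal{C}$, $\|w(x)\|^2\|\nabla g(x)\|\le 2rL_1\langle w(x),\nabla g(x)\rangle$ (i.e. $\|w(x)\|\le 2rL_1\cos\phi(x)$ with $\phi(x)$ the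 angle between $w(x)$ and $\nabla g(x)$). *)

theory Defs
  imports "HOL-Analysis.Analysis"
begin

definition grad :: "(real^'n \<Rightarrow> real) \<Rightarrow> real^'n \<Rightarrow> real^'n" where
  "grad F x = (THE d. (F has_derivative (\<lambda>h. d \<bullet> h)) (at x))"

definition sigma_max :: "real^'n^'n \<Rightarrow> real" where
  "sigma_max M = onorm (\<lambda>x. M *v x)"

definition sigma_min :: "real^'n^'n \<Rightarrow> real" where
  "sigma_min M = Inf {norm (M *v x) | x. norm x = 1}"

definition sym_psd :: "real^'n^'n \<Rightarrow> bool" where
  "sym_psd M \<longleftrightarrow> transpose M = M \<and> (\<forall>x. 0 \<le> x \<bullet> (M *v x))"

definition sym_pd :: "real^'n^'n \<Rightarrow> bool" where
  "sym_pd M \<longleftrightarrow> transpose M = M \<and> (\<forall>x. x \<noteq> 0 \<longrightarrow> 0 < x \<bullet> (M *v x))"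

definition fobj :: "real^'n^'n \<Rightarrow> real^'n \<Rightarrow> real^'n \<Rightarrow> real" where
  "fobj Q q x = (1/2) * (x \<bullet> (Q *v x)) + q \<bullet> x"

definition gcon :: "real^'n^'n \<Rightarrow> real^'n \<Rightarrow> real^'n \<Rightarrow> real" where
  "gcon A v x = (x - v) \<bullet> (A *v (x - v))"

definition Jpen :: "real^'n^'n \<Rightarrow> real^'n \<Rightarrow> real^'n^'n \<Rightarrow> real^'n \<Rightarrow> real \<Rightarrow> nat \<Rightarrow> real^'n \<Rightarrow> real" where
  "Jpen Q q A v m k x = fobj Q q x + (m / real k) * (gcon A v x) ^ k"

definition Lconst :: "real^'n^'n \<Rightarrow> real^'n^'n \<Rightarrow> real \<Rightarrow> nat \<Rightarrow> real" where
  "Lconst Q A m k = sigma_max (Q + (m * (4 * real k - 2)) *\<^sub>R A)"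

definition rconst :: "real^'n^'n \<Rightarrow> real" where
  "rconst A = sqrt (sigma_min A) / sigma_max A"

definition requirement2 :: "real^'n^'n \<Rightarrow> real^'n \<Rightarrow> real^'n^'n \<Rightarrow> real^'n \<Rightarrow> real \<Rightarrow> bool" where
  "requirement2 Q q A v m \<longleftrightarrow>
     (\<forall>x. gcon A v x = 1 \<longrightarrow>
        (let w = grad (fobj Q q) x + m *\<^sub>R grad (gcon A v) x in
         (norm w)^2 * norm (grad (gcon A v) x)
           \<le> 2 * rconst A * Lconst Q A m 1 * (w \<bullet> grad (gcon A v) x)))"

end

(*
  Shifting by v turns the feasible set into the ellipsoid E = {u. u' A u <= 1}, and the gradient
  of J_k at v + u into Q u + grad f(v) + 2 m g^(k-1) A u.

  Requirement 2 says that the step of length 1 / L_1 for J_1 maps every boundary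
  point of E into E. That step is affine, so it maps all of E into E, and so does every shorter
  step. For k >= 2 and u = t e with e on the boundary, the step for J_k is a convex combination
  of a J_1-step at e and a damped step y - gamma Q y scaled by (2k-2)/(2k-1), minus gamma grad f(v);
  the damped step stays in E because the support function of its image is dominated, via
  L_1 <= L_k <= 1 / gamma, by that of the image of E under the J_1-step.

  On C the gradients of J_k are bounded by some G, and J_k is convex with
  f <= J_k <= f + m/k, so with D_k = |x_k - xstar|^2 and a_k = f(x_k) - f(xstar) >= 0,
  D_(k+1) <= D_k - 2 gamma_k (a_k - m/k) + gamma_k^2 G^2. Summing, sum gamma_k a_k < oo; since
  sum gamma_k = oo and a_k increases by at most O(gamma_k) per step, a_k -> 0.
*)

theory Submission
  imports Defs
begin

section \<open>Symmetric matrices and gradients\<close>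

lemma inner_matrix_vector_symmetric:
  fixes M :: "real^'n^'n"
  assumes "transpose M = M"
  shows "x \<bullet> (M *v y) = (M *v x) \<bullet> y"
proof -
  have "(M *v x) \<bullet> y = (x v* transpose M) \<bullet> y" by simp
  also have "\<dots> = x \<bullet> (transpose M *v y)" by (rule dot_lmul_matrix)
  finally show ?thesis using assms by simp
qed

lemma self_adjoint_psd_Cauchy_Schwarz:
  fixes F :: "'a::real_inner \<Rightarrow> 'a"
  assumes lin: "linear F"
    and adj: "\<And>x y. x \<bullet> F y = F x \<bullet> y"
    and psd: "\<And>z. 0 \<le> z \<bullet> F z"
  shows "(x \<bullet> F y)^2 \<le> (x \<bullet> F x) * (y \<bullet> F y)"
proof -
  define a b c where "a = x \<bullet> F x" and "b = x \<bullet> F y" and "c = y \<bullet> F y"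
  have yx: "y \<bullet> F x = b" unfolding b_def using adj[of y x] by (simp add: inner_commute)
  have quadratic: "0 \<le> a + 2 * t * b + t^2 * c" for t
  proof -
    have "0 \<le> (x + t *\<^sub>R y) \<bullet> F (x + t *\<^sub>R y)" by (rule psd)
    also have "\<dots> = a + t * b + t * (y \<bullet> F x) + t^2 * c"
      unfolding a_def b_def c_def linear_add[OF lin] linear_scale[OF lin]
      by (simp add: inner_add_left inner_add_right power2_eq_square algebra_simps)
    finally show ?thesis unfolding yx by (simp add: algebra_simps)
  qed
  show ?thesis
  proof (cases "c = 0")
    case True
    have "b = 0"
    proof (rule ccontr)
      assume "b \<noteq> 0"
      have "0 \<le> a + 2 * (-(a + 1) / (2 * b)) * b + (-(a + 1) / (2 * b))^2 * c"
        by (rule quadratic)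
      also have "\<dots> = -1" using \<open>b \<noteq> 0\<close> True by (simp add: field_simps)
      finally show False by simp
    qed
    then show ?thesis using True unfolding a_def b_def c_def by simp
  next
    case False
    then have "c > 0" using psd[of y] unfolding c_def by simp
    have "0 \<le> a + 2 * (-b / c) * b + (-b / c)^2 * c" by (rule quadratic)
    also have "\<dots> = a - b^2 / c" using \<open>c > 0\<close> by (simp add: field_simps power2_eq_square)
    finally have "b^2 \<le> a * c" using \<open>c > 0\<close> by (simp add: divide_le_eq)
    then show ?thesis unfolding a_def b_def c_def .
  qed
qed

lemma sigma_max_nonneg: "0 \<le> sigma_max M"
  unfolding sigma_max_def by (rule onorm_pos_le[OF matrix_vector_mul_bounded_linear])

lemma norm_matrix_vector_le_sigma_max:
  assumes "norm x \<le> r"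
  shows "norm (M *v x) \<le> sigma_max M * r"
proof -
  have "norm (M *v x) \<le> sigma_max M * norm x"
    unfolding sigma_max_def by (rule onorm[OF matrix_vector_mul_bounded_linear])
  also have "\<dots> \<le> sigma_max M * r" by (rule mult_left_mono[OF assms sigma_max_nonneg])
  finally show ?thesis .
qed

lemma sigma_min_nonneg: "0 \<le> sigma_min (M :: real^'n^'n)"
  unfolding sigma_min_def
proof (rule cInf_greatest)
  show "{norm (M *v x) |x. norm x = 1} \<noteq> {}"
    using norm_axis_1 by blast
qed auto

lemma grad_eqI:
  assumes "(F has_derivative (\<lambda>h. d \<bullet> h)) (at x)"
  shows "grad F x = d"
  unfolding grad_def
proof (rule the_equality)
  fix d' assume "(F has_derivative (\<lambda>h. d' \<bullet> h)) (at x)"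
  then have "(\<lambda>h. d' \<bullet> h) = (\<lambda>h. d \<bullet> h)" using assms by (rule has_derivative_unique)
  then have "d' \<bullet> (d' - d) = d \<bullet> (d' - d)" by meson
  then have "(d' - d) \<bullet> (d' - d) = 0" by (simp add: inner_diff_left)
  then show "d' = d" by simp
qed (rule assms)

lemma has_derivative_fobj:
  assumes "transpose Q = Q"
  shows "(fobj Q q has_derivative (\<lambda>h. (Q *v x + q) \<bullet> h)) (at x)"
proof -
  have "(fobj Q q has_derivative (\<lambda>h. 1/2 * (h \<bullet> (Q *v x) + x \<bullet> (Q *v h)) + q \<bullet> h)) (at x)"
    unfolding fobj_def[abs_def]
    by (auto intro!: derivative_eq_intros bounded_linear_imp_has_derivative)
  moreover have "(\<lambda>h. 1/2 * (h \<bullet> (Q *v x) + x \<bullet> (Q *v h)) + q \<bullet> h) = (\<lambda>h. (Q *v x + q) \<bullet> h)"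
    using inner_matrix_vector_symmetric[OF assms]
    by (auto simp: fun_eq_iff inner_add_left inner_commute algebra_simps)
  ultimately show ?thesis by simp
qed

lemma has_derivative_gcon:
  assumes "transpose A = A"
  shows "(gcon A v has_derivative (\<lambda>h. (2 *\<^sub>R (A *v (x - v))) \<bullet> h)) (at x)"
proof -
  have "(gcon A v has_derivative (\<lambda>h. h \<bullet> (A *v (x - v)) + (x - v) \<bullet> (A *v h))) (at x)"
    unfolding gcon_def[abs_def]
    by (auto intro!: derivative_eq_intros bounded_linear_imp_has_derivative
        simp: matrix_vector_mult_diff_distrib)
  moreover have "(\<lambda>h. h \<bullet> (A *v (x - v)) + (x - v) \<bullet> (A *v h)) = (\<lambda>h. (2 *\<^sub>R (A *v (x - v))) \<bullet> h)"
    using inner_matrix_vector_symmetric[OF assms] by (auto simp: fun_eq_iff inner_commute algebra_simps)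
  ultimately show ?thesis by simp
qed

lemma grad_fobj: "transpose Q = Q \<Longrightarrow> grad (fobj Q q) x = Q *v x + q"
  by (rule grad_eqI[OF has_derivative_fobj])

lemma grad_gcon: "transpose A = A \<Longrightarrow> grad (gcon A v) x = 2 *\<^sub>R (A *v (x - v))"
  by (rule grad_eqI[OF has_derivative_gcon])

lemma grad_Jpen:
  assumes "transpose Q = Q" "transpose A = A" "k \<ge> 1"
  shows "grad (Jpen Q q A v m k) x
    = Q *v x + q + (2 * m * gcon A v x ^ (k - 1)) *\<^sub>R (A *v (x - v))"
proof (rule grad_eqI)
  have "(Jpen Q q A v m k has_derivative (\<lambda>h. (Q *v x + q) \<bullet> h
      + m / real k * (real k * ((2 *\<^sub>R (A *v (x - v))) \<bullet> h) * gcon A v x ^ (k - 1)))) (at x)"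
    unfolding Jpen_def[abs_def] using assms(3)
    by (auto intro!: derivative_eq_intros has_derivative_fobj[OF assms(1)]
        has_derivative_gcon[OF assms(2)])
  then show "(Jpen Q q A v m k has_derivative (\<lambda>h. (Q *v x + q
      + (2 * m * gcon A v x ^ (k - 1)) *\<^sub>R (A *v (x - v))) \<bullet> h)) (at x)"
    using assms(3) by (simp add: inner_add_left algebra_simps)
qed

section \<open>Real inequalities and sequences\<close>

lemma le_sqrt_self_imp_le_one:
  fixes a :: real
  assumes "a \<le> sqrt a"
  shows "a \<le> 1"
proof (rule ccontr)
  assume "\<not> a \<le> 1"
  then have "sqrt a * 1 < sqrt a * sqrt a" by (intro mult_strict_left_mono) auto
  then show False using assms \<open>\<not> a \<le> 1\<close> by simp
qed

lemma power_mult_one_minus_le: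
  fixes s :: real
  assumes "0 \<le> s" "s \<le> 1"
  shows "real k * s ^ (k - 1) * (1 - s) \<le> 1"
proof -
  have "real k * s ^ (k - 1) = (\<Sum>i<k. s ^ (k - 1))" by simp
  also have "\<dots> \<le> (\<Sum>i<k. s ^ i)"
    by (rule sum_mono) (use assms in \<open>auto intro: power_decreasing\<close>)
  finally have "real k * s ^ (k - 1) * (1 - s) \<le> (\<Sum>i<k. s ^ i) * (1 - s)"
    using assms by (intro mult_right_mono) auto
  also have "\<dots> = 1 - s ^ k" using one_diff_power_eq[of s k] by (simp add: mult.commute)
  also have "\<dots> \<le> 1" using assms by simp
  finally show ?thesis .
qed

lemma exists_damping_weight:
  fixes t :: real
  assumes "0 \<le> t" "t \<le> 1"
  obtains s where "0 \<le> s" "s \<le> 1" "t ^ Suc n + (1 - t ^ Suc n) * (real n / (real n + 1)) * s = t"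
proof (cases "n = 0 \<or> t = 1")
  case True
  then show ?thesis using that[of 0] by auto
next
  case False
  then have "0 < n" "t < 1" using assms by auto
  define \<theta> D where "\<theta> = t ^ Suc n" and "D = (1 - \<theta>) * (real n / (real n + 1))"
  have "t * t ^ n \<le> t * 1" using assms by (intro mult_left_mono power_le_one) auto
  then have \<theta>: "\<theta> \<le> t" "\<theta> < 1" unfolding \<theta>_def using \<open>t < 1\<close> by auto
  then have "0 < D" unfolding D_def using \<open>0 < n\<close> by simp
  have "1 + real (Suc n) * (t - 1) \<le> \<theta>"
    using Bernoulli_inequality[of "t - 1" "Suc n"] assms unfolding \<theta>_def by simp
  then have "(t - \<theta>) * (real n + 1) \<le> (1 - \<theta>) * real n"
    by (simp add: algebra_simps)
  then have "t - \<theta> \<le> D" unfolding D_def by (simp add: field_simps)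
  show ?thesis
  proof (rule that)
    show "0 \<le> (t - \<theta>) / D" "(t - \<theta>) / D \<le> 1"
      using \<theta> \<open>0 < D\<close> \<open>t - \<theta> \<le> D\<close> by simp_all
    show "t ^ Suc n + (1 - t ^ Suc n) * (real n / (real n + 1)) * ((t - \<theta>) / D) = t"
      unfolding \<theta>_def[symmetric] D_def[symmetric] using \<open>0 < D\<close> by simp
  qed
qed

lemma summable_of_descent:
  fixes D w \<epsilon> :: "nat \<Rightarrow> real"
  assumes "\<And>n. 0 \<le> D n" "\<And>n. 0 \<le> w n" "\<And>n. 0 \<le> \<epsilon> n" "summable \<epsilon>"
    and descent: "\<And>n. D (Suc n) \<le> D n - w n + \<epsilon> n"
  shows "summable w"
proof (rule summableI_nonneg_bounded)
  fix N
  have "(\<Sum>i<N. w i) \<le> D 0 - D N + (\<Sum>i<N. \<epsilon> i)"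
  proof (induction N)
    case (Suc N)
    with descent[of N] show ?case by simp
  qed simp
  also have "\<dots> \<le> D 0 + suminf \<epsilon>"
    using assms(1)[of N] sum_le_suminf[OF assms(4), of "{..<N}"] assms(3) by simp
  finally show "(\<Sum>i<N. w i) \<le> D 0 + suminf \<epsilon>" .
qed (rule assms(2))

lemma summable_div_Suc_of_summable_square:
  fixes \<beta> :: "nat \<Rightarrow> real"
  assumes "summable (\<lambda>n. (\<beta> n)^2)"
  shows "summable (\<lambda>n. \<beta> n / real (Suc n))"
proof (rule summable_comparison_test')
  have "summable (\<lambda>n. inverse (real n ^ 2))" by (rule inverse_power_summable) simp
  then have "summable (\<lambda>n. inverse (real (Suc n) ^ 2))" by (subst summable_Suc_iff)
  then show "summable (\<lambda>n. (\<beta> n)^2 + (1 / real (Suc n))^2)"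
    using assms by (simp add: summable_add power_one_over inverse_eq_divide)
  fix n
  have "2 * (\<bar>\<beta> n\<bar> * (1 / real (Suc n))) \<le> (\<beta> n)^2 + (1 / real (Suc n))^2"
    using sum_squares_bound[of "\<bar>\<beta> n\<bar>" "1 / real (Suc n)"] by (simp add: power2_abs)
  moreover have "0 \<le> \<bar>\<beta> n\<bar> * (1 / real (Suc n))" by simp
  ultimately have "\<bar>\<beta> n\<bar> * (1 / real (Suc n)) \<le> (\<beta> n)^2 + (1 / real (Suc n))^2" by linarith
  then show "norm (\<beta> n / real (Suc n)) \<le> (\<beta> n)^2 + (1 / real (Suc n))^2"
    by (simp add: abs_mult)
qed

lemma frequently_below_of_summable_weighted:
  fixes \<alpha> \<beta> :: "nat \<Rightarrow> real"
  assumes "\<And>n. 0 \<le> \<beta> n" "summable (\<lambda>n. \<beta> n * \<alpha> n)" "\<not> summable \<beta>" "0 < e"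
  shows "\<exists>N\<ge>M. \<alpha> N < e"
proof (rule ccontr)
  assume "\<not> ?thesis"
  then have "\<And>n. n \<ge> M \<Longrightarrow> e \<le> \<alpha> n" by (meson not_le)
  then have "norm (\<beta> n) \<le> (1 / e) * (\<beta> n * \<alpha> n)" if "n \<ge> M" for n
    using that assms(1)[of n] \<open>0 < e\<close> mult_left_mono[of e "\<alpha> n" "\<beta> n"] by (simp add: field_simps)
  then have "summable \<beta>"
    by (rule summable_comparison_test'[OF summable_mult[OF assms(2), of "1 / e"]])
  then show False using assms(3) by simp
qed

lemma excursion_bound:
  fixes \<alpha> \<beta> :: "nat \<Rightarrow> real"
  assumes "\<And>n. 0 \<le> \<beta> n" "\<And>n. \<alpha> (Suc n) - \<alpha> n \<le> K * \<beta> n" "0 < K" "0 < e"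
    and "j < n" "\<alpha> j < e" "\<And>i. j < i \<Longrightarrow> i < n \<Longrightarrow> e \<le> \<alpha> i"
  shows "\<alpha> n - e < K * \<beta> j + (K / e) * (\<Sum>i = Suc j..<n. \<beta> i * \<alpha> i)"
proof -
  have "\<alpha> n - \<alpha> j = (\<Sum>i = j..<n. \<alpha> (Suc i) - \<alpha> i)"
    using \<open>j < n\<close> by (simp add: sum_Suc_diff')
  also have "\<dots> \<le> (\<Sum>i = j..<n. K * \<beta> i)" by (intro sum_mono assms(2))
  also have "\<dots> = K * \<beta> j + K * (\<Sum>i = Suc j..<n. \<beta> i)"
    using \<open>j < n\<close> by (simp add: sum.atLeast_Suc_lessThan sum_distrib_left)
  also have "(\<Sum>i = Suc j..<n. \<beta> i) \<le> (\<Sum>i = Suc j..<n. \<beta> i * \<alpha> i) / e"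
  proof -
    have "e * (\<Sum>i = Suc j..<n. \<beta> i) \<le> (\<Sum>i = Suc j..<n. \<beta> i * \<alpha> i)"
      unfolding sum_distrib_left
      by (intro sum_mono) (use assms(1,7) in \<open>auto simp: mult.commute mult_right_mono\<close>)
    then show ?thesis using \<open>0 < e\<close> by (simp add: field_simps)
  qed
  finally show ?thesis using assms(3,6) by (simp add: mult_left_mono)
qed

text \<open>\<open>\<alpha>\<close> falls below any \<open>e > 0\<close> infinitely often, since otherwise \<open>\<beta>\<close> would be summable;
  once \<open>\<beta>\<close> and the tails of \<open>\<Sum> \<beta> \<alpha>\<close> are small, it cannot climb back above \<open>2 e\<close>.\<close>

lemma LIMSEQ_zero_of_summable_weighted:
  fixes \<alpha> \<beta> :: "nat \<Rightarrow> real"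
  assumes \<alpha>: "\<And>n. 0 \<le> \<alpha> n" and \<beta>: "\<And>n. 0 \<le> \<beta> n" "\<beta> \<longlonglongrightarrow> 0" "\<not> summable \<beta>"
    and summable: "summable (\<lambda>n. \<beta> n * \<alpha> n)"
    and increments: "\<And>n. \<alpha> (Suc n) - \<alpha> n \<le> K * \<beta> n" and "0 < K"
  shows "\<alpha> \<longlonglongrightarrow> 0"
proof (rule LIMSEQ_I)
  fix r :: real assume "0 < r"
  define e where "e = r / 2"
  have "0 < e" using \<open>0 < r\<close> unfolding e_def by simp
  obtain M1 where M1: "\<And>i j. M1 \<le> i \<Longrightarrow> norm (\<Sum>l = i..<j. \<beta> l * \<alpha> l) < e * e / (2 * K)"
    using summable[unfolded summable_Cauchy] \<open>0 < e\<close> \<open>0 < K\<close> by (meson divide_pos_pos mult_pos_pos zero_less_numeral)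
  obtain M2 where M2: "\<And>i. M2 \<le> i \<Longrightarrow> \<bar>\<beta> i\<bar> < e / (2 * K)"
    using LIMSEQ_D[OF \<beta>(2), of "e / (2 * K)"] \<open>0 < e\<close> \<open>0 < K\<close> by auto
  obtain N where N: "max M1 M2 \<le> N" "\<alpha> N < e"
    using frequently_below_of_summable_weighted[OF \<beta>(1) summable \<beta>(3) \<open>0 < e\<close>] by blast
  have "\<alpha> n < 2 * e" if "N \<le> n" for n
  proof (rule ccontr)
    assume "\<not> \<alpha> n < 2 * e"
    define j where "j = Max {j. N \<le> j \<and> j \<le> n \<and> \<alpha> j < e}"
    have "j \<in> {j. N \<le> j \<and> j \<le> n \<and> \<alpha> j < e}"
      unfolding j_def using N \<open>N \<le> n\<close> by (intro Max_in) (auto intro: finite_subset[of _ "{..n}"])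
    then have j: "N \<le> j" "j < n" "\<alpha> j < e"
      using \<open>\<not> \<alpha> n < 2 * e\<close> \<open>0 < e\<close> by (auto simp: order.order_iff_strict)
    have above: "e \<le> \<alpha> i" if "j < i" "i < n" for i
    proof (rule ccontr)
      assume "\<not> e \<le> \<alpha> i"
      then have "i \<le> j" unfolding j_def using that j by (intro Max_ge) auto
      then show False using that by simp
    qed
    have "\<alpha> n - e < K * \<beta> j + (K / e) * (\<Sum>i = Suc j..<n. \<beta> i * \<alpha> i)"
      by (rule excursion_bound[OF \<beta>(1) increments \<open>0 < K\<close> \<open>0 < e\<close> j(2,3) above])
    also have "\<dots> < K * (e / (2 * K)) + (K / e) * (e * e / (2 * K))"
      using M1[of "Suc j" n] M2[of j] j(1) N(1) \<open>0 < K\<close> \<open>0 < e\<close>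
      by (intro add_strict_mono mult_strict_left_mono) (auto simp: abs_less_iff)
    also have "\<dots> = e" using \<open>0 < K\<close> \<open>0 < e\<close> by (simp add: field_simps)
    finally show False using \<open>\<not> \<alpha> n < 2 * e\<close> by simp
  qed
  then show "\<exists>N. \<forall>n\<ge>N. norm (\<alpha> n - 0) < r"
    using \<alpha> unfolding e_def by auto
qed

section \<open>The ellipsoid\<close>

locale ellipsoid =
  fixes A :: "real^'n^'n"
  assumes A_pd: "sym_pd A"
begin

definition qf :: "real^'n \<Rightarrow> real" where "qf u = u \<bullet> (A *v u)"

lemma gcon_eq_qf: "gcon A v x = qf (x - v)"
  unfolding gcon_def qf_def ..

lemma A_symmetric: "transpose A = A"
  using A_pd unfolding sym_pd_def by simp

lemma inner_A_commute: "x \<bullet> (A *v y) = (A *v x) \<bullet> y"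
  by (rule inner_matrix_vector_symmetric[OF A_symmetric])

lemma qf_pos: "u \<noteq> 0 \<Longrightarrow> 0 < qf u"
  using A_pd unfolding sym_pd_def qf_def by simp

lemma qf_nonneg: "0 \<le> qf u"
  using qf_pos[of u] by (cases "u = 0") (auto simp: qf_def)

lemma qf_Cauchy_Schwarz: "(x \<bullet> (A *v y))^2 \<le> qf x * qf y"
  unfolding qf_def
  by (rule self_adjoint_psd_Cauchy_Schwarz[OF matrix_vector_mul_linear inner_A_commute
        qf_nonneg[unfolded qf_def]])

lemma inner_A_le_sqrt_qf: "x \<bullet> (A *v y) \<le> sqrt (qf x) * sqrt (qf y)"
  using real_sqrt_le_mono[OF qf_Cauchy_Schwarz[of x y]]
  by (simp add: real_sqrt_mult)

lemma qf_add: "qf (x + y) = qf x + 2 * (x \<bullet> (A *v y)) + qf y"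
  unfolding qf_def using inner_A_commute[of y x]
  by (simp add: matrix_vector_right_distrib inner_add_left inner_add_right inner_commute)

lemma qf_diff: "qf (x - y) = qf x - 2 * (x \<bullet> (A *v y)) + qf y"
  unfolding qf_def using inner_A_commute[of y x]
  by (simp add: matrix_vector_mult_diff_distrib inner_diff_left inner_diff_right inner_commute)

lemma qf_scaleR: "qf (c *\<^sub>R x) = c^2 * qf x"
  unfolding qf_def by (simp add: matrix_vector_mult_scaleR power2_eq_square)

lemma sqrt_qf_triangle: "sqrt (qf (x + y)) \<le> sqrt (qf x) + sqrt (qf y)"
proof -
  have "qf (x + y) \<le> (sqrt (qf x) + sqrt (qf y))^2"
    unfolding qf_add using inner_A_le_sqrt_qf[of x y] qf_nonneg[of x] qf_nonneg[of y]
    by (simp add: power2_eq_square algebra_simps)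
  moreover have "0 \<le> sqrt (qf x) + sqrt (qf y)" using qf_nonneg by simp
  ultimately show ?thesis by (rule real_le_lsqrt[rotated])
qed

lemma qf_convex_combination_le_1:
  assumes "qf x \<le> 1" "qf y \<le> 1" "0 \<le> a" "a \<le> 1"
  shows "qf (a *\<^sub>R x + (1 - a) *\<^sub>R y) \<le> 1"
proof -
  have "qf (a *\<^sub>R x + (1 - a) *\<^sub>R y) = a * qf x + (1 - a) * qf y - a * (1 - a) * qf (x - y)"
    unfolding qf_add qf_scaleR qf_diff
    by (simp add: matrix_vector_mult_scaleR power2_eq_square algebra_simps)
  moreover have "0 \<le> a * (1 - a) * qf (x - y)" using assms qf_nonneg by simp
  moreover have "a * qf x + (1 - a) * qf y \<le> a * 1 + (1 - a) * 1"
    using assms by (intro add_mono mult_left_mono) auto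
  ultimately show ?thesis by simp
qed

lemma qf_coercive: "\<exists>c>0. \<forall>u. c * (norm u)^2 \<le> qf u"
proof -
  have "continuous_on (sphere 0 1) qf"
    unfolding qf_def[abs_def] by (intro continuous_intros)
  moreover have "axis undefined 1 \<in> sphere (0::real^'n) 1" by simp
  ultimately obtain e where e: "e \<in> sphere 0 1" and min: "\<And>u. u \<in> sphere 0 1 \<Longrightarrow> qf e \<le> qf u"
    using continuous_attains_inf[OF compact_sphere] by blast
  have "qf e * (norm u)^2 \<le> qf u" for u
  proof (cases "u = 0")
    case False
    have "qf e \<le> qf ((1 / norm u) *\<^sub>R u)" using False by (intro min) simp
    then show ?thesis using False by (simp add: qf_scaleR power_divide field_simps)
  qed (simp add: qf_def)
  moreover have "0 < qf e" using e by (intro qf_pos) auto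
  ultimately show ?thesis by blast
qed

lemma ellipsoid_bounded: "\<exists>R\<ge>0. \<forall>u. qf u \<le> 1 \<longrightarrow> norm u \<le> R"
proof -
  obtain c where c: "c > 0" "\<And>u. c * (norm u)^2 \<le> qf u" using qf_coercive by blast
  have bound: "norm u \<le> sqrt (1 / c)" if "qf u \<le> 1" for u
    using c(2)[of u] that c(1) by (simp add: real_le_rsqrt field_simps)
  show ?thesis
  proof (intro exI[of _ "sqrt (1 / c)"] conjI allI impI)
    show "0 \<le> sqrt (1 / c)" using c(1) by simp
  qed (rule bound)
qed

lemma ellipsoid_polar:
  assumes "qf u \<le> 1"
  obtains e t where "qf e = 1" "0 \<le> t" "t \<le> 1" "u = t *\<^sub>R e"
proof -
  have unit: "qf ((1 / sqrt (qf y)) *\<^sub>R y) = 1" if "y \<noteq> 0" for y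
    using qf_pos[OF that] by (simp add: qf_scaleR power_divide)
  show ?thesis
  proof (cases "u = 0")
    case True
    then show ?thesis using that[OF unit[of "axis undefined 1"], of 0] by simp
  next
    case False
    then show ?thesis
      using that[OF unit[OF False], of "sqrt (qf u)"] assms qf_pos[OF False] by simp
  qed
qed

lemma A_inj: "A *v x = A *v y \<Longrightarrow> x = y"
  using qf_pos[of "x - y"] by (cases "x = y") (auto simp: qf_def matrix_vector_mult_diff_distrib)

lemma A_surj: "\<exists>y. A *v y = p"
proof -
  have "surj ((*v) A)"
    by (rule linear_injective_imp_surjective) (auto intro: injI A_inj matrix_vector_mul_linear)
  then show ?thesis by (metis surjD)
qed

lemma inner_A_le_sqrt_qf_of_le_1: "qf w \<le> 1 \<Longrightarrow> z \<bullet> (A *v w) \<le> sqrt (qf z)"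
  using inner_A_le_sqrt_qf[of z w] mult_left_mono[of "sqrt (qf w)" 1 "sqrt (qf z)"]
  by (simp add: qf_nonneg)

text \<open>\<open>sqrt (qf y)\<close> is the support function of the ellipsoid in direction \<open>A *v y\<close>.\<close>

lemma exists_inner_A_eq_sqrt_qf: "\<exists>u. qf u \<le> 1 \<and> y \<bullet> (A *v u) = sqrt (qf y)"
proof (cases "y = 0")
  case False
  define u where "u = (1 / sqrt (qf y)) *\<^sub>R y"
  have "qf u = 1" "y \<bullet> (A *v u) = sqrt (qf y)"
    using qf_pos[OF False] unfolding u_def
    by (simp_all add: qf_scaleR power_divide matrix_vector_mult_scaleR real_div_sqrt flip: qf_def)
  then show ?thesis by (auto intro!: exI[of _ u])
qed (auto intro!: exI[of _ 0] simp: qf_def)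

lemma qf_shrink_le:
  assumes "0 \<le> y \<bullet> (A *v d)" "0 \<le> t" "t \<le> 1" "0 \<le> c"
  shows "qf (t *\<^sub>R y + c *\<^sub>R d) \<le> qf (y + c *\<^sub>R d)"
proof -
  have "t^2 * qf y \<le> qf y" using assms(2,3) qf_nonneg[of y] by (simp add: mult_left_le_one_le power_le_one)
  moreover have "c * (t * (y \<bullet> (A *v d))) \<le> c * (y \<bullet> (A *v d))"
    using assms by (intro mult_left_mono mult_left_le_one_le) auto
  ultimately show ?thesis unfolding qf_add qf_scaleR by (simp add: matrix_vector_mult_scaleR)
qed

lemma qf_le_sigma_max: "qf w \<le> sigma_max A * (norm w)^2"
proof -
  have "qf w \<le> norm w * norm (A *v w)" unfolding qf_def by (rule norm_cauchy_schwarz)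
  also have "\<dots> \<le> norm w * (sigma_max A * norm w)"
    by (intro mult_left_mono norm_matrix_vector_le_sigma_max) simp_all
  finally show ?thesis by (simp add: power2_eq_square algebra_simps)
qed

lemma sqrt_sigma_min_le_norm_A:
  assumes "qf e = 1"
  shows "sqrt (sigma_min A) \<le> norm (A *v e)"
proof -
  have e0: "e \<noteq> 0" using assms by (auto simp: qf_def)
  have "sigma_min A \<le> norm (A *v ((1 / norm e) *\<^sub>R e))"
    unfolding sigma_min_def
    by (rule cInf_lower) (use e0 in \<open>auto intro: bdd_belowI[of _ 0]\<close>)
  then have min: "sigma_min A * norm e \<le> norm (A *v e)"
    using e0 by (simp add: matrix_vector_mult_scaleR divide_simps)
  have "1 \<le> norm e * norm (A *v e)"
    using norm_cauchy_schwarz[of e "A *v e"] assms by (simp add: qf_def)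
  then have "sigma_min A \<le> sigma_min A * (norm e * norm (A *v e))"
    using sigma_min_nonneg[of A] by (metis mult.right_neutral mult_left_mono)
  also have "\<dots> \<le> norm (A *v e) * norm (A *v e)"
    using min by (simp add: mult.assoc[symmetric] mult_right_mono)
  finally have "sigma_min A \<le> (norm (A *v e))^2" by (simp add: power2_eq_square)
  then show ?thesis by (rule real_le_lsqrt[OF norm_ge_zero])
qed

end

section \<open>Convergence of the objective values\<close>

locale penalty_problem = ellipsoid A for A :: "real^'n^'n" +
  fixes Q :: "real^'n^'n" and q v :: "real^'n" and m :: real
  assumes Q_psd: "sym_psd Q" and m_pos: "0 < m"
begin

lemma Q_symmetric: "transpose Q = Q"
  using Q_psd unfolding sym_psd_def by simp

lemma Q_nonneg: "0 \<le> y \<bullet> (Q *v y)"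
  using Q_psd unfolding sym_psd_def by simp

lemma inner_Q_commute: "x \<bullet> (Q *v y) = (Q *v x) \<bullet> y"
  by (rule inner_matrix_vector_symmetric[OF Q_symmetric])

lemma grad_Jpen_eq:
  "k \<ge> 1 \<Longrightarrow> grad (Jpen Q q A v m k) x
    = Q *v x + q + (2 * m * qf (x - v) ^ (k - 1)) *\<^sub>R (A *v (x - v))"
  using grad_Jpen[OF Q_symmetric A_symmetric] by (simp add: gcon_eq_qf)

lemma fobj_diff: "fobj Q q y - fobj Q q x = ((1/2) *\<^sub>R (Q *v (x + y)) + q) \<bullet> (y - x)"
proof -
  have "(Q *v y) \<bullet> x = (Q *v x) \<bullet> y" using inner_Q_commute[of x y] by (simp add: inner_commute)
  then show ?thesis unfolding fobj_def
    by (simp add: matrix_vector_right_distrib inner_add_left inner_diff_right inner_commute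
        algebra_simps)
qed

lemma feasible_bounded: "\<exists>R\<ge>0. \<forall>x. gcon A v x \<le> 1 \<longrightarrow> norm x \<le> R"
proof -
  obtain R where R: "0 \<le> R" "\<And>u. qf u \<le> 1 \<Longrightarrow> norm u \<le> R" using ellipsoid_bounded by blast
  have "norm x \<le> norm v + R" if "gcon A v x \<le> 1" for x
    using R(2)[of "x - v"] that norm_triangle_sub[of x v] by (simp add: gcon_eq_qf)
  then show ?thesis using R(1) by (intro exI[of _ "norm v + R"]) simp
qed

lemma grad_Jpen_bounded:
  obtains G where "0 < G"
    "\<And>k x. k \<ge> 1 \<Longrightarrow> gcon A v x \<le> 1 \<Longrightarrow> norm (grad (Jpen Q q A v m k) x) \<le> G"
proof -
  obtain R where R: "0 \<le> R" "\<And>u. qf u \<le> 1 \<Longrightarrow> norm u \<le> R" using ellipsoid_bounded by blast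
  define G where "G = sigma_max Q * (norm v + R) + norm q + 2 * m * (sigma_max A * R) + 1"
  have "norm (grad (Jpen Q q A v m k) x) \<le> G" if "k \<ge> 1" "gcon A v x \<le> 1" for k x
  proof -
    define s where "s = qf (x - v) ^ (k - 1)"
    have u: "qf (x - v) \<le> 1" "norm (x - v) \<le> R" using that R(2) by (auto simp: gcon_eq_qf)
    have s: "0 \<le> s" "s \<le> 1" unfolding s_def using u(1) qf_nonneg by (auto simp: power_le_one)
    have "norm (Q *v x) \<le> sigma_max Q * (norm v + R)"
      using norm_triangle_sub[of x v] u(2) by (intro norm_matrix_vector_le_sigma_max) simp
    moreover have "norm ((2 * m * s) *\<^sub>R (A *v (x - v))) \<le> 2 * m * (sigma_max A * R)"
    proof -
      have "norm (A *v (x - v)) \<le> sigma_max A * R"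
        using u(2) by (rule norm_matrix_vector_le_sigma_max)
      then show ?thesis using s m_pos mult_mono[of s 1 "norm (A *v (x - v))" "sigma_max A * R"]
        by (simp add: abs_mult)
    qed
    ultimately show ?thesis
      using norm_triangle_ineq[of "Q *v x + q" "(2 * m * s) *\<^sub>R (A *v (x - v))"]
        norm_triangle_ineq[of "Q *v x" q]
      unfolding grad_Jpen_eq[OF that(1)] G_def s_def[symmetric] by linarith
  qed
  moreover have "0 < G"
  proof -
    have "0 \<le> sigma_max Q * (norm v + R)" using sigma_max_nonneg[of Q] R(1) by simp
    moreover have "0 \<le> 2 * m * (sigma_max A * R)" using sigma_max_nonneg[of A] R(1) m_pos by simp
    ultimately show ?thesis unfolding G_def using norm_ge_zero[of q] by linarith
  qed
  ultimately show ?thesis using that by blast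
qed

lemma fobj_lipschitz_feasible:
  obtains K where "0 < K"
    "\<And>x y. gcon A v x \<le> 1 \<Longrightarrow> gcon A v y \<le> 1 \<Longrightarrow> fobj Q q y - fobj Q q x \<le> K * norm (y - x)"
proof -
  obtain R where R: "0 \<le> R" "\<And>x. gcon A v x \<le> 1 \<Longrightarrow> norm x \<le> R"
    using feasible_bounded by blast
  define K where "K = sigma_max Q * R + norm q + 1"
  have "fobj Q q y - fobj Q q x \<le> K * norm (y - x)" if "gcon A v x \<le> 1" "gcon A v y \<le> 1" for x y
  proof -
    have "norm (Q *v (x + y)) \<le> sigma_max Q * (2 * R)"
      using norm_triangle_ineq[of x y] R(2)[OF that(1)] R(2)[OF that(2)]
      by (intro norm_matrix_vector_le_sigma_max) simp
    then have "norm ((1/2) *\<^sub>R (Q *v (x + y)) + q) \<le> K"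
      using norm_triangle_ineq[of "(1/2) *\<^sub>R (Q *v (x + y))" q] unfolding K_def by simp
    from mult_right_mono[OF this norm_ge_zero[of "y - x"]] show ?thesis
      unfolding fobj_diff using norm_cauchy_schwarz[of "(1/2) *\<^sub>R (Q *v (x + y)) + q" "y - x"]
      by linarith
  qed
  moreover have "0 < K"
    unfolding K_def using mult_nonneg_nonneg[OF sigma_max_nonneg[of Q] R(1)] norm_ge_zero[of q] by linarith
  ultimately show ?thesis using that by blast
qed

text \<open>Convexity of \<open>f\<close> and \<open>g\<close>; on the feasible set the penalty term costs at most
  \<open>m s\<^sup>k\<^sup>-\<^sup>1 (1 - s) \<le> m / k\<close>, where \<open>s = g x\<close>.\<close>

lemma fobj_le_inner_grad_Jpen:
  assumes k: "k \<ge> 1" and x: "gcon A v x \<le> 1" and y: "gcon A v y \<le> 1"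
  shows "fobj Q q x - fobj Q q y - m / real k \<le> grad (Jpen Q q A v m k) x \<bullet> (x - y)"
proof -
  define s where "s = qf (x - v)"
  have s: "0 \<le> s" "s \<le> 1" using x qf_nonneg unfolding s_def by (auto simp: gcon_eq_qf)
  have f_convex: "fobj Q q x - fobj Q q y \<le> (Q *v x + q) \<bullet> (x - y)"
  proof -
    have "(Q *v x + q) \<bullet> (x - y) - (fobj Q q x - fobj Q q y) = (1/2) * ((x - y) \<bullet> (Q *v (x - y)))"
      unfolding fobj_diff using inner_Q_commute[of x y] inner_Q_commute[of y x]
      by (simp add: matrix_vector_mult_diff_distrib matrix_vector_right_distrib inner_diff_left
          inner_diff_right inner_add_left inner_commute algebra_simps)
    then show ?thesis using Q_nonneg[of "x - y"] by simp
  qed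
  have g_convex: "s - 1 \<le> (2 *\<^sub>R (A *v (x - v))) \<bullet> (x - y)"
  proof -
    define u w where "u = x - v" and "w = y - v"
    have "(2 *\<^sub>R (A *v u)) \<bullet> (u - w) = qf u + qf (u - w) - qf w"
      unfolding qf_diff using inner_A_commute[of u w]
      by (simp add: qf_def inner_diff_right inner_commute)
    moreover have "x - y = u - w" "qf u = s" "qf w \<le> 1"
      using y unfolding u_def w_def s_def by (auto simp: gcon_eq_qf)
    ultimately show ?thesis using qf_nonneg[of "u - w"] unfolding u_def[symmetric] by simp
  qed
  have "m * s ^ (k - 1) * (1 - s) = m * (real k * s ^ (k - 1) * (1 - s)) / real k"
    using k by simp
  also have "\<dots> \<le> m * 1 / real k"
    using power_mult_one_minus_le[OF s, of k] m_pos by (intro divide_right_mono mult_left_mono) auto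
  finally have "- (m / real k) \<le> m * s ^ (k - 1) * (s - 1)" by (simp add: algebra_simps)
  also have "\<dots> \<le> m * s ^ (k - 1) * ((2 *\<^sub>R (A *v (x - v))) \<bullet> (x - y))"
    using g_convex m_pos s by (intro mult_left_mono) auto
  also have "\<dots> = grad (Jpen Q q A v m k) x \<bullet> (x - y) - (Q *v x + q) \<bullet> (x - y)"
    unfolding grad_Jpen_eq[OF k] s_def by (simp add: inner_add_left)
  finally show ?thesis using f_convex by simp
qed

lemma gradient_step_distance:
  assumes k: "k \<ge> 1" and x: "gcon A v x \<le> 1" and y: "gcon A v y \<le> 1" and "0 \<le> \<gamma>"
    and G: "norm (grad (Jpen Q q A v m k) x) \<le> G"
  shows "(norm (x - \<gamma> *\<^sub>R grad (Jpen Q q A v m k) x - y))^2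
    \<le> (norm (x - y))^2 - 2 * \<gamma> * (fobj Q q x - fobj Q q y - m / real k) + \<gamma>^2 * G^2"
proof -
  define g where "g = grad (Jpen Q q A v m k) x"
  have "x - \<gamma> *\<^sub>R g - y = (x - y) - \<gamma> *\<^sub>R g" by simp
  then have "(norm (x - \<gamma> *\<^sub>R g - y))^2 = (norm (x - y))^2 - 2 * \<gamma> * (g \<bullet> (x - y)) + \<gamma>^2 * (norm g)^2"
    unfolding power2_norm_eq_inner
    by (simp add: inner_diff_left inner_diff_right inner_commute power2_eq_square algebra_simps)
  moreover have "2 * \<gamma> * (fobj Q q x - fobj Q q y - m / real k) \<le> 2 * \<gamma> * (g \<bullet> (x - y))"
    using fobj_le_inner_grad_Jpen[OF k x y] \<open>0 \<le> \<gamma>\<close> unfolding g_def by (simp add: mult_left_mono)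
  moreover have "\<gamma>^2 * (norm g)^2 \<le> \<gamma>^2 * G^2"
    using G unfolding g_def by (intro mult_left_mono power_mono) auto
  ultimately show ?thesis unfolding g_def by linarith
qed

lemma weighted_gap_summable:
  fixes X :: "nat \<Rightarrow> real^'n" and \<beta> :: "nat \<Rightarrow> real"
  assumes feasible: "\<And>n. gcon A v (X n) \<le> 1"
    and step: "\<And>n. X (Suc n) = X n - \<beta> n *\<^sub>R grad (Jpen Q q A v m (Suc n)) (X n)"
    and \<beta>: "\<And>n. 0 < \<beta> n" "summable (\<lambda>n. (\<beta> n)^2)"
    and xstar: "gcon A v xstar \<le> 1" "\<And>y. gcon A v y \<le> 1 \<Longrightarrow> fobj Q q xstar \<le> fobj Q q y"
  shows "summable (\<lambda>n. \<beta> n * (fobj Q q (X n) - fobj Q q xstar))"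
proof -
  obtain G where G:
    "\<And>k x. k \<ge> 1 \<Longrightarrow> gcon A v x \<le> 1 \<Longrightarrow> norm (grad (Jpen Q q A v m k) x) \<le> G"
    using grad_Jpen_bounded by blast
  define a where "a n = fobj Q q (X n) - fobj Q q xstar" for n
  define \<epsilon> where "\<epsilon> n = 2 * m * (\<beta> n / real (Suc n)) + (\<beta> n)^2 * G^2" for n
  have weighted_nonneg: "0 \<le> \<beta> n * a n" for n
    unfolding a_def using xstar(2)[OF feasible] \<beta>(1)[of n] by simp
  have "summable (\<lambda>n. \<beta> n * a n)"
  proof (rule summable_of_descent)
    show "(norm (X (Suc n) - xstar))^2 \<le> (norm (X n - xstar))^2 - \<beta> n * a n + \<epsilon> n" for n
    proof -
      have "(norm (X (Suc n) - xstar))^2 \<le> (norm (X n - xstar))^2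
          - 2 * \<beta> n * (fobj Q q (X n) - fobj Q q xstar - m / real (Suc n)) + (\<beta> n)^2 * G^2"
        unfolding step using \<beta>(1)[of n]
        by (intro gradient_step_distance feasible xstar(1) G) auto
      moreover have "2 * \<beta> n * (fobj Q q (X n) - fobj Q q xstar - m / real (Suc n))
          = 2 * (\<beta> n * a n) - 2 * m * (\<beta> n / real (Suc n))"
        unfolding a_def by (simp add: algebra_simps)
      ultimately show ?thesis unfolding \<epsilon>_def using weighted_nonneg[of n] by linarith
    qed
    show "summable \<epsilon>" unfolding \<epsilon>_def
      by (intro summable_add summable_mult summable_mult2 summable_div_Suc_of_summable_square \<beta>(2))
    show "0 \<le> \<epsilon> n" for n unfolding \<epsilon>_def using \<beta>(1)[of n] m_pos by simp
  qed (use weighted_nonneg in simp_all)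
  then show ?thesis unfolding a_def .
qed

lemma objective_convergence:
  fixes X :: "nat \<Rightarrow> real^'n" and \<beta> :: "nat \<Rightarrow> real"
  assumes feasible: "\<And>n. gcon A v (X n) \<le> 1"
    and step: "\<And>n. X (Suc n) = X n - \<beta> n *\<^sub>R grad (Jpen Q q A v m (Suc n)) (X n)"
    and \<beta>: "\<And>n. 0 < \<beta> n" "summable (\<lambda>n. (\<beta> n)^2)" "\<not> summable \<beta>"
    and xstar: "gcon A v xstar \<le> 1" "\<And>y. gcon A v y \<le> 1 \<Longrightarrow> fobj Q q xstar \<le> fobj Q q y"
  shows "(\<lambda>n. fobj Q q (X n)) \<longlonglongrightarrow> fobj Q q xstar"
proof -
  obtain G where G: "0 < G"
    "\<And>k x. k \<ge> 1 \<Longrightarrow> gcon A v x \<le> 1 \<Longrightarrow> norm (grad (Jpen Q q A v m k) x) \<le> G"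
    using grad_Jpen_bounded by blast
  obtain K where K: "0 < K"
    "\<And>x y. gcon A v x \<le> 1 \<Longrightarrow> gcon A v y \<le> 1 \<Longrightarrow> fobj Q q y - fobj Q q x \<le> K * norm (y - x)"
    using fobj_lipschitz_feasible by blast
  define a where "a n = fobj Q q (X n) - fobj Q q xstar" for n
  have a: "0 \<le> a n" for n unfolding a_def using xstar(2)[OF feasible] by simp
  have \<beta>_nonneg: "0 \<le> \<beta> n" for n using \<beta>(1)[of n] by simp
  have \<beta>_lim: "\<beta> \<longlonglongrightarrow> 0"
    using tendsto_real_sqrt[OF summable_LIMSEQ_zero[OF \<beta>(2)]] \<beta>_nonneg by simp
  have increments: "a (Suc n) - a n \<le> (K * G) * \<beta> n" for n
  proof -
    have "a (Suc n) - a n \<le> K * norm (X (Suc n) - X n)"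
      unfolding a_def using K(2)[OF feasible feasible] by simp
    also have "\<dots> \<le> K * (\<beta> n * G)"
      unfolding step using \<beta>(1)[of n] G(2)[OF _ feasible, of "Suc n"] K(1)
      by (simp add: mult_left_mono)
    finally show ?thesis by (simp add: algebra_simps)
  qed
  from LIMSEQ_zero_of_summable_weighted[OF a \<beta>_nonneg \<beta>_lim \<beta>(3)
      weighted_gap_summable[OF feasible step \<beta>(1,2) xstar, folded a_def] increments]
  have "a \<longlonglongrightarrow> 0" using K(1) G(1) by simp
  then show ?thesis unfolding a_def by (simp add: LIM_zero_iff)
qed

end

section \<open>Invariance of the feasible set\<close>

context penalty_problem
begin

definition P :: "nat \<Rightarrow> real^'n \<Rightarrow> real^'n" where
  "P k y = (Q + (m * (4 * real k - 2)) *\<^sub>R A) *v y"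

abbreviation L :: "nat \<Rightarrow> real" where
  "L k \<equiv> Lconst Q A m k"

lemma P_eq: "P k y = Q *v y + (m * (4 * real k - 2)) *\<^sub>R (A *v y)"
  unfolding P_def by (simp add: matrix_vector_mult_add_rdistrib scaleR_matrix_vector_assoc)

lemma linear_P: "linear (P k)"
  unfolding P_def[abs_def] by (rule matrix_vector_mul_linear)

lemma norm_P_le: "norm (P k y) \<le> L k * norm y"
  unfolding P_def Lconst_def by (rule norm_matrix_vector_le_sigma_max) simp

lemma L_nonneg: "0 \<le> L k"
  unfolding Lconst_def by (rule sigma_max_nonneg)

lemma inner_P_commute: "x \<bullet> P k y = P k x \<bullet> y"
  unfolding P_eq using inner_Q_commute[of x y] inner_A_commute[of x y]
  by (simp add: inner_add_left inner_add_right)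

lemma inner_P_self: "y \<bullet> P k y = y \<bullet> (Q *v y) + m * (4 * real k - 2) * qf y"
  unfolding P_eq qf_def by (simp add: inner_add_right)

lemma inner_P_self_nonneg: "k \<ge> 1 \<Longrightarrow> 0 \<le> y \<bullet> P k y"
  unfolding inner_P_self using Q_nonneg[of y] qf_nonneg[of y] m_pos by simp

lemma inner_P_self_le: "y \<bullet> P k y \<le> L k * (norm y)^2"
proof -
  have "y \<bullet> P k y \<le> norm y * norm (P k y)" by (rule norm_cauchy_schwarz)
  also have "\<dots> \<le> norm y * (L k * norm y)" by (intro mult_left_mono norm_P_le) simp
  finally show ?thesis by (simp add: power2_eq_square algebra_simps)
qed

lemma inner_P_self_mono: "1 \<le> j \<Longrightarrow> j \<le> k \<Longrightarrow> y \<bullet> P j y \<le> y \<bullet> P k y"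
  unfolding inner_P_self using qf_nonneg[of y] m_pos by (intro add_left_mono mult_right_mono) auto

lemma L_1_le:
  assumes "k \<ge> 1"
  shows "L 1 \<le> L k"
proof -
  have "norm (P 1 x) \<le> L k * norm x" for x
  proof -
    define y where "y = P 1 x"
    have "((norm y)^2)^2 = (x \<bullet> P 1 y)^2"
      unfolding y_def by (simp add: inner_P_commute power2_norm_eq_inner)
    also have "\<dots> \<le> (x \<bullet> P 1 x) * (y \<bullet> P 1 y)"
      by (rule self_adjoint_psd_Cauchy_Schwarz[OF linear_P inner_P_commute inner_P_self_nonneg]) simp
    also have "\<dots> \<le> (L k * (norm x)^2) * (L k * (norm y)^2)"
      using inner_P_self_nonneg[of 1] inner_P_self_mono[OF _ assms] inner_P_self_le[of _ k]
        L_nonneg[of k]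
      by (intro mult_mono) (auto intro: order_trans)
    also have "\<dots> = (L k * norm x * norm y)^2" by (simp only: power_mult_distrib power2_eq_square mult_ac)
    finally have "(norm y)^2 \<le> L k * norm x * norm y"
      by (rule power2_le_imp_le) (use L_nonneg[of k] in simp)
    then show ?thesis unfolding y_def by (cases "P 1 x = 0") (simp_all add: power2_eq_square L_nonneg)
  qed
  then have "onorm (P 1) \<le> L k" by (rule onorm_le)
  then show ?thesis by (simp add: P_def[abs_def] Lconst_def sigma_max_def)
qed

lemma L_1_pos: "0 < L 1"
proof -
  let ?e = "axis undefined 1 :: real^'n"
  have "0 < 2 * m * qf ?e" using m_pos qf_pos[of ?e] by simp
  also have "\<dots> \<le> ?e \<bullet> P 1 ?e" unfolding inner_P_self using Q_nonneg[of ?e] by simp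
  also have "\<dots> \<le> L 1 * (norm ?e)^2" by (rule inner_P_self_le)
  finally show ?thesis by simp
qed

definition grad_f_v :: "real^'n" where
  "grad_f_v = Q *v v + q"

lemma grad_Jpen_shifted:
  "k \<ge> 1 \<Longrightarrow> grad (Jpen Q q A v m k) (v + u)
    = Q *v u + grad_f_v + (2 * m * qf u ^ (k - 1)) *\<^sub>R (A *v u)"
  unfolding grad_Jpen_eq grad_f_v_def by (simp add: matrix_vector_right_distrib)

end

locale penalty_requirement = penalty_problem +
  assumes requirement: "requirement2 Q q A v m"
begin

text \<open>\<open>P 1 e + grad_f_v\<close> is the vector \<open>w\<close> of Requirement 2 at the boundary point \<open>v + e\<close>.\<close>

lemma requirement2_boundary:
  assumes e: "qf e = 1"
  shows "qf (P 1 e + grad_f_v) \<le> 2 * L 1 * ((P 1 e + grad_f_v) \<bullet> (A *v e))"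
proof -
  define w where "w = P 1 e + grad_f_v"
  have on_boundary: "gcon A v (v + e) = 1" using e by (simp add: gcon_eq_qf)
  have grad_g: "grad (gcon A v) (v + e) = 2 *\<^sub>R (A *v e)" by (simp add: grad_gcon[OF A_symmetric])
  have grad_sum: "grad (fobj Q q) (v + e) + m *\<^sub>R (2 *\<^sub>R (A *v e)) = w"
    unfolding grad_fobj[OF Q_symmetric] w_def P_eq grad_f_v_def
    by (simp add: matrix_vector_right_distrib algebra_simps)
  have req: "(norm w)^2 * (2 * norm (A *v e)) \<le> 2 * rconst A * L 1 * (2 * (w \<bullet> (A *v e)))"
    using requirement[unfolded requirement2_def, rule_format, OF on_boundary]
    unfolding Let_def grad_g grad_sum by simp
  have "A *v e \<noteq> 0" using e by (auto simp: qf_def)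
  show ?thesis
  proof (cases "rconst A = 0")
    case True
    then have "w = 0" using req \<open>A *v e \<noteq> 0\<close> by (simp add: mult_le_0_iff)
    then show ?thesis unfolding w_def by (simp add: qf_def)
  next
    case False
    then have "0 < sigma_min A" "0 < sigma_max A"
      using sigma_min_nonneg[of A] sigma_max_nonneg[of A] unfolding rconst_def
      by (auto simp: order.order_iff_strict)
    have "sigma_max A * ((norm w)^2 * norm (A *v e)) \<le> 2 * sqrt (sigma_min A) * L 1 * (w \<bullet> (A *v e))"
      using req \<open>0 < sigma_max A\<close> unfolding rconst_def by (simp add: field_simps)
    moreover have "sigma_max A * ((norm w)^2 * sqrt (sigma_min A))
        \<le> sigma_max A * ((norm w)^2 * norm (A *v e))"
      using sqrt_sigma_min_le_norm_A[OF e] \<open>0 < sigma_max A\<close> by (intro mult_left_mono) auto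
    ultimately have "sqrt (sigma_min A) * (sigma_max A * (norm w)^2)
        \<le> sqrt (sigma_min A) * (2 * L 1 * (w \<bullet> (A *v e)))"
      by (simp add: algebra_simps)
    then have "sigma_max A * (norm w)^2 \<le> 2 * L 1 * (w \<bullet> (A *v e))"
      using \<open>0 < sigma_min A\<close> by simp
    then show ?thesis using qf_le_sigma_max[of w] unfolding w_def by simp
  qed
qed

lemma boundary_step_feasible:
  assumes e: "qf e = 1"
  shows "qf (e - (1 / L 1) *\<^sub>R (P 1 e + grad_f_v)) \<le> 1"
proof -
  define w where "w = P 1 e + grad_f_v"
  have "qf (e - (1 / L 1) *\<^sub>R w) = qf e - 2 * (1 / L 1) * (w \<bullet> (A *v e)) + (1 / L 1)^2 * qf w"
    unfolding qf_diff qf_scaleR using inner_A_commute[of e w]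
    by (simp add: matrix_vector_mult_scaleR inner_commute)
  also have "\<dots> \<le> 1 - 2 * (1 / L 1) * (w \<bullet> (A *v e)) + (1 / L 1)^2 * (2 * L 1 * (w \<bullet> (A *v e)))"
    using requirement2_boundary[OF e] e unfolding w_def[symmetric]
    by (intro add_mono mult_left_mono) auto
  also have "\<dots> = 1" using L_1_pos by (simp add: power2_eq_square field_simps)
  finally show ?thesis unfolding w_def .
qed

text \<open>The full step is affine, and every point of the ellipsoid is a convex combination of two
  antipodal boundary points.\<close>

lemma full_step_feasible:
  assumes "qf u \<le> 1"
  shows "qf (u - (1 / L 1) *\<^sub>R (P 1 u + grad_f_v)) \<le> 1"
proof -
  obtain e t where e: "qf e = 1" and t: "0 \<le> t" "t \<le> 1" and u: "u = t *\<^sub>R e"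
    using ellipsoid_polar[OF assms] by blast
  have "qf (- e) = 1" using e qf_scaleR[of "-1" e] by simp
  have "u - (1 / L 1) *\<^sub>R (P 1 u + grad_f_v)
      = ((1 + t) / 2) *\<^sub>R (e - (1 / L 1) *\<^sub>R (P 1 e + grad_f_v))
        + (1 - (1 + t) / 2) *\<^sub>R ((- e) - (1 / L 1) *\<^sub>R (P 1 (- e) + grad_f_v))"
    unfolding u linear_scale[OF linear_P] linear_neg[OF linear_P] using L_1_pos
    by (simp add: vec_eq_iff field_simps)
  then show ?thesis
    using qf_convex_combination_le_1[OF boundary_step_feasible[OF e]
        boundary_step_feasible[OF \<open>qf (- e) = 1\<close>], of "(1 + t) / 2"] t
    by simp
qed

lemma step_feasible:
  assumes "qf u \<le> 1" "0 \<le> \<gamma>" "\<gamma> \<le> 1 / L 1"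
  shows "qf (u - \<gamma> *\<^sub>R (P 1 u + grad_f_v)) \<le> 1"
proof -
  have weight: "0 \<le> \<gamma> * L 1" "\<gamma> * L 1 \<le> 1" using assms L_1_pos by (auto simp: field_simps)
  have "u - \<gamma> *\<^sub>R (P 1 u + grad_f_v)
      = (\<gamma> * L 1) *\<^sub>R (u - (1 / L 1) *\<^sub>R (P 1 u + grad_f_v)) + (1 - \<gamma> * L 1) *\<^sub>R u"
    using L_1_pos by (simp add: algebra_simps)
  then show ?thesis
    using qf_convex_combination_le_1[OF full_step_feasible[OF assms(1)] assms(1) weight] by simp
qed

text \<open>Dual form of \<open>full_step_feasible\<close>, in terms of the support function \<open>sqrt (qf z)\<close> of the
  ellipsoid in direction \<open>A *v z\<close>.\<close>

lemma dual_full_step_bound: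
  assumes "A *v y = L 1 *\<^sub>R (A *v z) - P 1 (A *v z)"
  shows "sqrt (qf y) \<le> L 1 * sqrt (qf z) + grad_f_v \<bullet> (A *v z)"
proof -
  define d where "d = A *v z"
  obtain u where u: "qf u \<le> 1" "y \<bullet> (A *v u) = sqrt (qf y)"
    using exists_inner_A_eq_sqrt_qf by blast
  define w where "w = u - (1 / L 1) *\<^sub>R (P 1 u + grad_f_v)"
  have "y \<bullet> (A *v u) = L 1 * (d \<bullet> u) - d \<bullet> P 1 u"
    using inner_A_commute[of y u] inner_P_commute[of d 1 u] assms unfolding d_def[symmetric]
    by (simp add: inner_diff_left)
  then have "sqrt (qf y) - grad_f_v \<bullet> d = L 1 * (d \<bullet> w)"
    unfolding w_def using u(2) L_1_pos
    by (simp add: inner_diff_right inner_add_right inner_commute algebra_simps)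
  also have "d \<bullet> w = z \<bullet> (A *v w)" unfolding d_def by (simp add: inner_A_commute)
  also have "L 1 * (z \<bullet> (A *v w)) \<le> L 1 * sqrt (qf z)"
    using inner_A_le_sqrt_qf_of_le_1[OF full_step_feasible[OF u(1)], of z] L_nonneg[of 1]
    unfolding w_def by (rule mult_left_mono)
  finally show ?thesis unfolding d_def by (simp add: inner_commute)
qed

lemma dual_damped_step_bound:
  assumes k: "k \<ge> 1" and "L k \<le> G" "0 \<le> t" "t \<le> 1"
    and y: "A *v y = G *\<^sub>R (A *v z) - P k (A *v z)"
  shows "sqrt (qf (t *\<^sub>R y + (m * (4 * real k - 4)) *\<^sub>R (A *v z)))
    \<le> G * sqrt (qf z) + grad_f_v \<bullet> (A *v z)"
proof -
  define c d where "c = m * (4 * real k - 4)" and "d = A *v z"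
  obtain y1 where y1: "A *v y1 = L 1 *\<^sub>R d - P 1 d" using A_surj by blast
  have "L 1 \<le> G" using L_1_le[OF k] \<open>L k \<le> G\<close> by linarith
  have "y \<bullet> (A *v d) = G * (d \<bullet> d) - d \<bullet> P k d"
    using inner_A_commute[of y d] y unfolding d_def[symmetric]
    by (simp add: inner_diff_left inner_diff_right inner_commute)
  moreover have "d \<bullet> P k d \<le> G * (d \<bullet> d)"
    using inner_P_self_le[of d k] mult_right_mono[OF \<open>L k \<le> G\<close>, of "d \<bullet> d"]
    by (simp add: power2_norm_eq_inner)
  moreover have "0 \<le> c" unfolding c_def using k m_pos by simp
  ultimately have "qf (t *\<^sub>R y + c *\<^sub>R d) \<le> qf (y + c *\<^sub>R d)"
    using qf_shrink_le[of y d t c] \<open>0 \<le> t\<close> \<open>t \<le> 1\<close> by simp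
  then have "sqrt (qf (t *\<^sub>R y + c *\<^sub>R d)) \<le> sqrt (qf (y + c *\<^sub>R d))" by simp
  also have "y + c *\<^sub>R d = y1 + (G - L 1) *\<^sub>R z"
  proof (rule A_inj)
    show "A *v (y + c *\<^sub>R d) = A *v (y1 + (G - L 1) *\<^sub>R z)"
      unfolding matrix_vector_right_distrib matrix_vector_mult_scaleR y y1 d_def[symmetric]
        P_eq c_def
      by (simp add: vec_eq_iff algebra_simps)
  qed
  also have "sqrt (qf (y1 + (G - L 1) *\<^sub>R z)) \<le> sqrt (qf y1) + (G - L 1) * sqrt (qf z)"
    using sqrt_qf_triangle[of y1 "(G - L 1) *\<^sub>R z"] \<open>L 1 \<le> G\<close>
    by (simp add: qf_scaleR real_sqrt_mult)
  also have "\<dots> \<le> G * sqrt (qf z) + grad_f_v \<bullet> d"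
    using dual_full_step_bound[OF y1[unfolded d_def]] unfolding d_def by (simp add: algebra_simps)
  finally show ?thesis unfolding c_def d_def .
qed

text \<open>With \<open>d = A *v z\<close>, bound \<open>qf z = d \<bullet> z\<close> through the support function of the ellipsoid,
  which gives \<open>qf z \<le> sqrt (qf z)\<close>.\<close>

lemma damped_step_feasible:
  assumes k: "k \<ge> 1" and \<gamma>: "0 < \<gamma>" "\<gamma> \<le> 1 / L k" and y: "qf y \<le> 1"
  shows "qf (((2 * real k - 2) / (2 * real k - 1)) *\<^sub>R (y - \<gamma> *\<^sub>R (Q *v y)) - \<gamma> *\<^sub>R grad_f_v) \<le> 1"
proof -
  define t c G where "t = (2 * real k - 2) / (2 * real k - 1)"
    and "c = m * (4 * real k - 4)" and "G = 1 / \<gamma>"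
  define z where "z = t *\<^sub>R (y - \<gamma> *\<^sub>R (Q *v y)) - \<gamma> *\<^sub>R grad_f_v"
  define d where "d = A *v z"
  obtain yk where yk: "A *v yk = G *\<^sub>R d - P k d" using A_surj by blast
  have "0 < 2 * real k - 1" using k by simp
  then have t: "0 \<le> t" "t \<le> 1" "t * (m * (4 * real k - 2)) = c"
    unfolding t_def c_def using k by (auto simp: field_simps)
  have "0 < L k" using L_1_pos L_1_le[OF k] by linarith
  then have "L k \<le> G" using \<gamma> unfolding G_def by (simp add: field_simps)
  have "\<gamma> * G = 1" using \<gamma>(1) unfolding G_def by simp
  have z_eq: "z = \<gamma> *\<^sub>R (t *\<^sub>R (G *\<^sub>R y - P k y) + c *\<^sub>R (A *v y) - grad_f_v)"
  proof -
    have "\<gamma> *\<^sub>R (t *\<^sub>R (G *\<^sub>R y - P k y) + c *\<^sub>R (A *v y) - grad_f_v)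
        = (\<gamma> * G * t) *\<^sub>R y - (\<gamma> * t) *\<^sub>R (Q *v y)
          + (\<gamma> * (c - t * (m * (4 * real k - 2)))) *\<^sub>R (A *v y) - \<gamma> *\<^sub>R grad_f_v"
      unfolding P_eq by (simp add: algebra_simps)
    also have "\<dots> = z" unfolding z_def \<open>\<gamma> * G = 1\<close> t(3) by (simp add: algebra_simps)
    finally show ?thesis by simp
  qed
  have inner_yk: "d \<bullet> (G *\<^sub>R y - P k y) = yk \<bullet> (A *v y)"
    using inner_P_commute[of d k y] inner_A_commute[of yk y] yk
    by (simp add: inner_diff_left inner_diff_right inner_commute)
  have "qf z = d \<bullet> z" unfolding qf_def d_def by (simp add: inner_commute)
  also have "\<dots> = \<gamma> * ((t *\<^sub>R yk + c *\<^sub>R d) \<bullet> (A *v y) - grad_f_v \<bullet> d)"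
    unfolding z_eq using inner_yk
    by (simp add: inner_add_right inner_diff_right inner_add_left inner_commute)
  also have "\<dots> \<le> \<gamma> * (sqrt (qf (t *\<^sub>R yk + c *\<^sub>R d)) - grad_f_v \<bullet> d)"
    using inner_A_le_sqrt_qf_of_le_1[OF y, of "t *\<^sub>R yk + c *\<^sub>R d"] \<gamma>(1)
    by (simp add: mult_left_mono)
  also have "\<dots> \<le> \<gamma> * (G * sqrt (qf z))"
    using dual_damped_step_bound[OF k \<open>L k \<le> G\<close> t(1,2) yk[unfolded d_def]] \<gamma>(1)
    unfolding c_def d_def by (simp add: mult_left_mono)
  also have "\<dots> = sqrt (qf z)" using \<open>\<gamma> * G = 1\<close> by simp
  finally have "qf z \<le> sqrt (qf z)" .
  then show ?thesis unfolding z_def t_def by (rule le_sqrt_self_imp_le_one)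
qed

text \<open>Write \<open>u = t e\<close> with \<open>qf e = 1\<close>. The gradient step at \<open>u\<close> is the convex combination, with
  weight \<open>t\<^sup>2\<^sup>k\<^sup>-\<^sup>1\<close>, of the \<open>k = 1\<close> step at \<open>e\<close> and a damped step at a rescaled point \<open>s e\<close>.\<close>

lemma gradient_step_feasible:
  assumes k: "k \<ge> 1" and \<gamma>: "0 < \<gamma>" "\<gamma> \<le> 1 / L k" and u: "qf u \<le> 1"
  shows "qf (u - \<gamma> *\<^sub>R (Q *v u + grad_f_v + (2 * m * qf u ^ (k - 1)) *\<^sub>R (A *v u))) \<le> 1"
proof -
  obtain e t where e: "qf e = 1" and t: "0 \<le> t" "t \<le> 1" and ue: "u = t *\<^sub>R e"
    using ellipsoid_polar[OF u] by blast
  define n \<theta> r where "n = 2 * k - 2" and "\<theta> = t ^ Suc n" and "r = real n / (real n + 1)"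
  obtain s where s: "0 \<le> s" "s \<le> 1" "\<theta> + (1 - \<theta>) * r * s = t"
    using exists_damping_weight[OF t] unfolding \<theta>_def r_def by blast
  have r: "(2 * real k - 2) / (2 * real k - 1) = r"
    unfolding r_def n_def using k by (simp add: of_nat_diff algebra_simps)
  have qf_u: "qf u ^ (k - 1) = t ^ n"
    unfolding ue qf_scaleR e n_def by (simp add: power_mult[symmetric] mult.commute diff_mult_distrib2)
  have \<theta>: "0 \<le> \<theta>" "\<theta> \<le> 1" "\<theta> = t * t ^ n"
    unfolding \<theta>_def using t power_le_one[of t "Suc n"] by simp_all
  have "1 / L k \<le> 1 / L 1"
    by (rule divide_left_mono) (use L_1_pos L_1_le[OF k] in auto)
  then have "\<gamma> \<le> 1 / L 1" using \<gamma>(2) by linarith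
  then have boundary: "qf (e - \<gamma> *\<^sub>R (P 1 e + grad_f_v)) \<le> 1"
    using step_feasible[of e \<gamma>] e \<gamma>(1) by simp
  have "qf (s *\<^sub>R e) \<le> 1" using s e by (simp add: qf_scaleR power_le_one)
  from damped_step_feasible[OF k \<gamma> this]
  have damped: "qf (r *\<^sub>R (s *\<^sub>R e - \<gamma> *\<^sub>R (Q *v (s *\<^sub>R e))) - \<gamma> *\<^sub>R grad_f_v) \<le> 1"
    unfolding r .
  have "\<theta> *\<^sub>R (e - \<gamma> *\<^sub>R (P 1 e + grad_f_v))
        + (1 - \<theta>) *\<^sub>R (r *\<^sub>R (s *\<^sub>R e - \<gamma> *\<^sub>R (Q *v (s *\<^sub>R e))) - \<gamma> *\<^sub>R grad_f_v)
      = (\<theta> + (1 - \<theta>) * r * s) *\<^sub>R e - (\<gamma> * (\<theta> + (1 - \<theta>) * r * s)) *\<^sub>R (Q *v e)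
        - (2 * \<gamma> * m * \<theta>) *\<^sub>R (A *v e) - \<gamma> *\<^sub>R grad_f_v"
    unfolding P_eq by (simp add: algebra_simps matrix_vector_mult_scaleR)
  also have "\<dots> = t *\<^sub>R e - (\<gamma> * t) *\<^sub>R (Q *v e) - (2 * \<gamma> * m * \<theta>) *\<^sub>R (A *v e) - \<gamma> *\<^sub>R grad_f_v"
    unfolding s(3) ..
  also have "\<dots> = u - \<gamma> *\<^sub>R (Q *v u + grad_f_v + (2 * m * qf u ^ (k - 1)) *\<^sub>R (A *v u))"
    by (simp only: qf_u) (simp add: \<theta>(3) ue algebra_simps matrix_vector_mult_scaleR)
  finally show ?thesis
    using qf_convex_combination_le_1[OF boundary damped \<theta>(1,2)] by simp
qed

lemma iterates_feasible:
  assumes x1: "gcon A v (x 1) \<le> 1"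
    and iter: "\<And>k. k \<ge> 1 \<Longrightarrow> x (Suc k) = x k - \<gamma> k *\<^sub>R grad (Jpen Q q A v m k) (x k)"
    and step: "\<And>k. k \<ge> 1 \<Longrightarrow> 0 < \<gamma> k \<and> \<gamma> k \<le> 1 / L k"
    and "k \<ge> 1"
  shows "gcon A v (x k) \<le> 1"
  using \<open>k \<ge> 1\<close>
proof (induction k rule: nat_induct_at_least)
  case base
  show ?case by (rule x1)
next
  case (Suc k)
  have "x (Suc k) - v = (x k - v) - \<gamma> k *\<^sub>R grad (Jpen Q q A v m k) (v + (x k - v))"
    using iter[OF Suc.hyps] by simp
  also have "\<dots> = (x k - v) - \<gamma> k *\<^sub>R (Q *v (x k - v) + grad_f_v
      + (2 * m * qf (x k - v) ^ (k - 1)) *\<^sub>R (A *v (x k - v)))"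
    by (simp only: grad_Jpen_shifted[OF Suc.hyps])
  finally have step_eq: "x (Suc k) - v = \<dots>" .
  have "qf ((x k - v) - \<gamma> k *\<^sub>R (Q *v (x k - v) + grad_f_v
      + (2 * m * qf (x k - v) ^ (k - 1)) *\<^sub>R (A *v (x k - v)))) \<le> 1"
    by (rule gradient_step_feasible[OF Suc.hyps])
      (use step[OF Suc.hyps] Suc.IH in \<open>auto simp: gcon_eq_qf\<close>)
  then show ?case unfolding gcon_eq_qf step_eq .
qed

end

theorem theorem1:
  fixes Q A :: "real^'n^'n" and q v :: "real^'n" and m :: real
    and \<gamma> :: "nat \<Rightarrow> real" and x :: "nat \<Rightarrow> real^'n" and xstar :: "real^'n"
  assumes Q: "sym_psd Q"
    and A: "sym_pd A"
    and m: "m > 0"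
    and req: "requirement2 Q q A v m"
    and x1: "gcon A v (x 1) \<le> 1"
    and iter: "\<And>k. k \<ge> 1 \<Longrightarrow> x (Suc k) = x k - \<gamma> k *\<^sub>R grad (Jpen Q q A v m k) (x k)"
    and step: "\<And>k. k \<ge> 1 \<Longrightarrow> 0 < \<gamma> k \<and> \<gamma> k \<le> 1 / Lconst Q A m k"
    and sq: "summable (\<lambda>k. (\<gamma> (Suc k))^2)"
    and div: "\<not> summable (\<lambda>k. \<gamma> (Suc k))"
    and xstar: "gcon A v xstar \<le> 1" "\<forall>y. gcon A v y \<le> 1 \<longrightarrow> fobj Q q xstar \<le> fobj Q q y"
  shows "(\<lambda>k. fobj Q q (x k)) \<longlonglongrightarrow> fobj Q q xstar"
proof -
  interpret penalty_requirement A Q q v m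
    by unfold_locales (simp_all add: A Q m req)
  have feasible: "gcon A v (x k) \<le> 1" if "k \<ge> 1" for k
    using x1 iter step that by (rule iterates_feasible)
  have "(\<lambda>n. fobj Q q (x (Suc n))) \<longlonglongrightarrow> fobj Q q xstar"
  proof (rule objective_convergence[of "\<lambda>n. x (Suc n)" "\<lambda>n. \<gamma> (Suc n)"])
    show "gcon A v (x (Suc n)) \<le> 1" for n by (rule feasible) simp
    show "x (Suc (Suc n)) = x (Suc n) - \<gamma> (Suc n) *\<^sub>R grad (Jpen Q q A v m (Suc n)) (x (Suc n))"
      for n by (rule iter) simp
    show "0 < \<gamma> (Suc n)" for n using step[of "Suc n"] by simp
  qed (use sq div xstar in simp_all)
  then show ?thesis by (rule LIMSEQ_imp_Suc)
qed

end
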